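(* Let $M$ be a $0/1$-matrix, let $B$ be a block of $M$, let $i$ be an entry of the input boundary $B^-$, and let $\sigma_1(i),\sigma_2(i)$ be two entries of the output boundary $B^+$ that are both reachable from $i$, with $\sigma_1(i)<\sigma_2(i)$ in the output-boundary order. If there is an entry $\sigma(j)$ of $B^+$ that is reachable from some entry $j\in B^-$ and satisfies $\sigma_1(i)<\sigma(j)<\sigma_2(i)$, then $\sigma(j)$ is also reachable from $i$.
   Context: Let $M$ be an $m\times n$ $0/1$-matrix with entries indexed $(r,s)$ (rows increasing from bottom to top, columns from left to right). A path from $(k,l)$ to $(i,j)$ is a sequence of $1$-entries starting at $(k,l)$ and ending at $(i,j)$ in which each step goes from $(r,s)$ to $(r+1,s)$, $(r,s+1)$ or $(r+1,s+1)$; $(i,j)$ is reachable from $(k,l)$ if such a path exists. A block $B$ is the submatrix formed by rows $r^-\le r\le r^+$ and columns $s^-\le s\le s^+$. Its input boundary $B^-$ consists of the entries in row $r^-$ or column $s^-$ of $B$, ordered: first row $r^-$ from column $s^+$ down to $s^-$, then the remaining entries of column $s^-$ from row $r^-+1$ up to $r^+$. Its output boundary $B^+$ consists of the entries in row $r^+$ or column $s^+$ of $B$, ordered: first column $s^+$ from row $r^-$ up to $r^+$, then the remaining entries of row $r^+$ from column $s^+-1$ down to $s^-$. *)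

theory Defs
  imports Main
begin

text \<open>An m x n 0/1-matrix is a function M :: nat => nat => nat (row r, column s),
  with rows 1..m (increasing bottom to top) and columns 1..n (left to right).
  Entries are pairs (r, s).\<close>

definition zero_one_matrix :: "nat \<Rightarrow> nat \<Rightarrow> (nat \<Rightarrow> nat \<Rightarrow> nat) \<Rightarrow> bool" where
  "zero_one_matrix m n M \<longleftrightarrow> (\<forall>r s. 1 \<le> r \<and> r \<le> m \<and> 1 \<le> s \<and> s \<le> n \<longrightarrow> M r s \<in> {0, 1})"

definition in_matrix :: "nat \<Rightarrow> nat \<Rightarrow> nat \<times> nat \<Rightarrow> bool" where
  "in_matrix m n x \<longleftrightarrow> 1 \<le> fst x \<and> fst x \<le> m \<and> 1 \<le> snd x \<and> snd x \<le> n"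

definition path_step :: "nat \<times> nat \<Rightarrow> nat \<times> nat \<Rightarrow> bool" where
  "path_step x y \<longleftrightarrow>
     y = (fst x + 1, snd x) \<or> y = (fst x, snd x + 1) \<or> y = (fst x + 1, snd x + 1)"

definition is_path :: "nat \<Rightarrow> nat \<Rightarrow> (nat \<Rightarrow> nat \<Rightarrow> nat) \<Rightarrow> (nat \<times> nat) list \<Rightarrow> bool" where
  "is_path m n M p \<longleftrightarrow> p \<noteq> [] \<and>
     (\<forall>x \<in> set p. in_matrix m n x \<and> M (fst x) (snd x) = 1) \<and>
     (\<forall>k. Suc k < length p \<longrightarrow> path_step (p ! k) (p ! Suc k))"

definition reachable :: "nat \<Rightarrow> nat \<Rightarrow> (nat \<Rightarrow> nat \<Rightarrow> nat) \<Rightarrow> nat \<times> nat \<Rightarrow> nat \<times> nat \<Rightarrow> bool" where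
  "reachable m n M x y \<longleftrightarrow> (\<exists>p. is_path m n M p \<and> hd p = x \<and> last p = y)"

definition is_block :: "nat \<Rightarrow> nat \<Rightarrow> nat \<Rightarrow> nat \<Rightarrow> nat \<Rightarrow> nat \<Rightarrow> bool" where
  "is_block m n rl ru sl su \<longleftrightarrow> 1 \<le> rl \<and> rl \<le> ru \<and> ru \<le> m \<and> 1 \<le> sl \<and> sl \<le> su \<and> su \<le> n"

definition in_block :: "nat \<Rightarrow> nat \<Rightarrow> nat \<Rightarrow> nat \<Rightarrow> nat \<times> nat \<Rightarrow> bool" where
  "in_block rl ru sl su x \<longleftrightarrow> rl \<le> fst x \<and> fst x \<le> ru \<and> sl \<le> snd x \<and> snd x \<le> su"

definition input_boundary :: "nat \<Rightarrow> nat \<Rightarrow> nat \<Rightarrow> nat \<Rightarrow> (nat \<times> nat) set" where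
  "input_boundary rl ru sl su = {x. in_block rl ru sl su x \<and> (fst x = rl \<or> snd x = sl)}"

definition output_boundary :: "nat \<Rightarrow> nat \<Rightarrow> nat \<Rightarrow> nat \<Rightarrow> (nat \<times> nat) set" where
  "output_boundary rl ru sl su = {x. in_block rl ru sl su x \<and> (fst x = ru \<or> snd x = su)}"

text \<open>Position in the order of B^+: first column su from row rl up to ru
  (positions 0 .. ru-rl), then row ru from column su-1 down to sl.\<close>
definition output_pos :: "nat \<Rightarrow> nat \<Rightarrow> nat \<Rightarrow> nat \<Rightarrow> nat \<times> nat \<Rightarrow> nat" where
  "output_pos rl ru sl su x = (if snd x = su then fst x - rl else (ru - rl) + (su - snd x))"

definition output_less :: "nat \<Rightarrow> nat \<Rightarrow> nat \<Rightarrow> nat \<Rightarrow> nat \<times> nat \<Rightarrow> nat \<times> nat \<Rightarrow> bool" where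
  "output_less rl ru sl su x y \<longleftrightarrow> output_pos rl ru sl su x < output_pos rl ru sl su y"

end

theory Submission
  imports Defs "HOL-Library.Product_Order"
begin

(*
  Paths are monotone in both coordinates, so a path from i to an output entry
  crosses every row between them, and two paths can be compared row by row.
  For c on the right column, a path Q from j to c must share an entry with the
  path from i to a or the one from i to b: in the row of i (or, if j lies higher,
  in the row of j on the left column) Q is weakly left of one of them, and in its
  last row it is weakly right of it; since a path moves at most one column per
  row, it cannot pass the other path without meeting it. Through the shared
  entry, i reaches c. The case of c on the top row is the transposed one.
*)

lemma is_path_iff_successively:
  "is_path m n M p \<longleftrightarrow> p \<noteq> [] \<and> (\<forall>x \<in> set p. in_matrix m n x \<and> M (fst x) (snd x) = 1)
     \<and> successively path_step p"
  unfolding is_path_def successively_conv_nth ..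

lemma path_step_le: "path_step x y \<Longrightarrow> x \<le> y"
  by (auto simp: path_step_def less_eq_prod_def)

lemma sorted_wrt_if_successively_path_step:
  "successively path_step p \<Longrightarrow> sorted_wrt (\<le>) p"
  by (metis path_step_le successively_mono successively_conv_sorted_wrt transp_on_le)

lemma sorted_wrt_hd_le:
  fixes xs :: "'a::preorder list"
  assumes "sorted_wrt (\<le>) xs" "x \<in> set xs"
  shows "hd xs \<le> x"
  using assms by (cases xs) auto

lemma sorted_wrt_le_last:
  fixes xs :: "'a::preorder list"
  assumes "sorted_wrt (\<le>) xs" "x \<in> set xs"
  shows "x \<le> last xs"
  using assms by (induction xs) auto

lemma sorted_wrt_comparable:
  fixes xs :: "'a::preorder list"
  assumes "sorted_wrt (\<le>) xs" "x \<in> set xs" "y \<in> set xs"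
  shows "x \<le> y \<or> y \<le> x"
  using assms by (induction xs) auto

lemma monotone_path_col_mono:
  assumes "successively path_step P" "p \<in> set P" "p' \<in> set P" "fst p < fst p'"
  shows "snd p \<le> snd p'"
  using sorted_wrt_comparable[OF sorted_wrt_if_successively_path_step[OF assms(1)] assms(2,3)] assms(4)
  by (auto simp: less_eq_prod_def)

lemma path_meets_every_row:
  assumes "successively path_step P" "P \<noteq> []" "fst (hd P) \<le> r" "r \<le> fst (last P)"
  shows "\<exists>x\<in>set P. fst x = r"
  using assms
proof (induction P)
  case (Cons x xs)
  show ?case
  proof (cases "r = fst x")
    case False
    then obtain y ys where xs: "xs = y # ys"
      using Cons.prems by (cases xs) auto
    with Cons.prems have "path_step x y" "successively path_step xs" by auto
    then have "fst y \<le> r" using False Cons.prems(3) by (auto simp: path_step_def)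
    with Cons.IH Cons.prems xs \<open>successively path_step xs\<close> show ?thesis by auto
  qed simp
qed simp

lemma path_step_left_of_monotone_path:
  assumes "successively path_step P" "p \<in> set P" "fst p = fst q" "snd q < snd p"
    and "path_step q q'" "fst q' \<le> fst (last P)"
  shows "\<exists>p'\<in>set P. fst p' = fst q' \<and> snd q' \<le> snd p'"
proof -
  have "\<exists>p'\<in>set P. fst p' = fst q' \<and> snd p \<le> snd p'"
  proof (cases "fst q' = fst q")
    case False
    have "hd P \<le> p"
      using sorted_wrt_hd_le[OF sorted_wrt_if_successively_path_step[OF assms(1)] assms(2)] .
    with assms(3,5) have "fst (hd P) \<le> fst q'"
      by (auto simp: path_step_def less_eq_prod_def)
    then obtain p' where "p' \<in> set P" "fst p' = fst q'"
      using path_meets_every_row[OF assms(1)] assms(2,6) by fastforce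
    moreover from False assms(3,5) \<open>fst p' = fst q'\<close> have "fst p < fst p'"
      by (auto simp: path_step_def)
    ultimately show ?thesis
      using monotone_path_col_mono[OF assms(1,2)] by blast
  qed (use assms in auto)
  with assms(4,5) show ?thesis
    by (fastforce simp: path_step_def)
qed

lemma monotone_paths_meet_from_head:
  assumes "successively path_step Q" "Q \<noteq> []" "successively path_step P"
    and "p \<in> set P" "fst p = fst (hd Q)" "snd (hd Q) \<le> snd p"
    and "fst (last Q) \<le> fst (last P)"
    and "\<forall>p\<in>set P. fst p = fst (last Q) \<longrightarrow> snd p \<le> snd (last Q)"
  shows "\<exists>z\<in>set Q. z \<in> set P"
  using assms
proof (induction Q arbitrary: p)
  case (Cons q Q')
  show ?case
  proof (cases "q \<in> set P")
    case False
    with Cons.prems(4-6) have q_left: "snd q < snd p"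
      by (metis le_neq_implies_less list.sel(1) prod.collapse)
    with Cons.prems have "Q' \<noteq> []"
      by auto
    then obtain q' rest where Q': "Q' = q' # rest"
      by (cases Q') auto
    have step: "path_step q q'" and path': "successively path_step Q'"
      using Cons.prems(1) Q' by auto
    have "q' \<le> last Q'"
      using sorted_wrt_le_last[OF sorted_wrt_if_successively_path_step[OF path']] Q' by simp
    with Cons.prems(7) \<open>Q' \<noteq> []\<close> have "fst q' \<le> fst (last P)"
      by (simp add: less_eq_prod_def)
    then obtain p' where "p' \<in> set P" "fst p' = fst (hd Q')" "snd (hd Q') \<le> snd p'"
      using path_step_left_of_monotone_path[OF Cons.prems(3,4) _ q_left step] Cons.prems(5) Q'
      by auto
    with Cons.IH[OF path' \<open>Q' \<noteq> []\<close> Cons.prems(3)] Cons.prems(7,8) \<open>Q' \<noteq> []\<close>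
    show ?thesis by auto
  qed simp
qed simp

lemma monotone_paths_meet:
  assumes "successively path_step Q" "successively path_step P"
    and "x \<in> set Q" "p \<in> set P" "fst p = fst x" "snd x \<le> snd p"
    and "fst (last Q) \<le> fst (last P)"
    and "\<forall>p\<in>set P. fst p = fst (last Q) \<longrightarrow> snd p \<le> snd (last Q)"
  shows "\<exists>z\<in>set Q. z \<in> set P"
proof -
  obtain xs ys where Q: "Q = xs @ x # ys"
    using assms(3) by (meson split_list)
  have "\<exists>z\<in>set (x # ys). z \<in> set P"
    using assms Q
    by (intro monotone_paths_meet_from_head) (auto simp: successively_append_iff)
  then show ?thesis
    using Q by auto
qed

lemma reachable_via_path:
  assumes "is_path m n M P" "z \<in> set P"
  shows "reachable m n M (hd P) z" "reachable m n M z (last P)"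
proof -
  obtain xs ys where P: "P = xs @ z # ys"
    using assms(2) by (meson split_list)
  have "is_path m n M (xs @ [z])" "is_path m n M (z # ys)"
    using assms(1) unfolding P is_path_iff_successively by (auto simp: successively_append_iff)
  moreover have "hd (xs @ [z]) = hd P" "last (z # ys) = last P"
    using P by (cases xs; simp)+
  ultimately show "reachable m n M (hd P) z" "reachable m n M z (last P)"
    unfolding reachable_def by (metis last_snoc, metis list.sel(1))
qed

lemma reachable_trans:
  assumes "reachable m n M x y" "reachable m n M y z"
  shows "reachable m n M x z"
proof -
  obtain p q where p: "is_path m n M p" "hd p = x" "last p = y"
    and q: "is_path m n M q" "hd q = y" "last q = z"
    using assms unfolding reachable_def by auto
  have p_split: "p = butlast p @ [y]" and q_split: "q = y # tl q"
    using p q unfolding is_path_iff_successively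
    by (metis append_butlast_last_id, metis list.collapse)
  let ?pq = "butlast p @ q"
  have "is_path m n M ?pq"
    using p q p_split q_split unfolding is_path_iff_successively
    by (metis (no_types, lifting) Un_iff append_is_Nil_conv in_set_butlastD set_append
        successively_append_iff list.sel(1) list.distinct(1))
  moreover have "hd ?pq = x"
    using p(2) q(2) p_split by (metis hd_append list.sel(1))
  moreover have "last ?pq = z"
    using q_split q(3) by (metis last_appendR list.distinct(1))
  ultimately show ?thesis
    unfolding reachable_def by blast
qed

lemma reachable_transpose:
  assumes "reachable m n M x y"
  shows "reachable n m (\<lambda>r s. M s r) (prod.swap x) (prod.swap y)"
proof -
  obtain p where p: "is_path m n M p" "hd p = x" "last p = y"
    using assms unfolding reachable_def by auto
  have "is_path n m (\<lambda>r s. M s r) (map prod.swap p)"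
    using p(1) unfolding is_path_iff_successively successively_map
    by (auto simp: in_matrix_def path_step_def elim: successively_mono)
  moreover have "hd (map prod.swap p) = prod.swap x" "last (map prod.swap p) = prod.swap y"
    using p unfolding is_path_iff_successively by (auto simp: hd_map last_map)
  ultimately show ?thesis
    unfolding reachable_def by blast
qed

lemma paths_to_right_column_meet:
  assumes i: "i \<in> input_boundary rl ru sl su" and j: "j \<in> input_boundary rl ru sl su"
    and a: "snd a = su" and c: "snd c = su" "fst a < fst c" and b: "fst c \<le> fst b" "snd b \<le> su"
    and steps: "successively path_step P1" "successively path_step P2" "successively path_step Q"
    and P1: "P1 \<noteq> []" "hd P1 = i" "last P1 = a"
    and P2: "P2 \<noteq> []" "hd P2 = i" "last P2 = b"
    and Q: "Q \<noteq> []" "hd Q = j" "last Q = c"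
  shows "\<exists>z\<in>set Q. z \<in> set P1 \<union> set P2"
proof -
  have ends: "i \<in> set P1" "i \<in> set P2" "j \<in> set Q"
    using P1 P2 Q by (metis hd_in_set)+
  have bounds: "hd P \<le> x" "x \<le> last P" if "successively path_step P" "x \<in> set P" for P x
    using sorted_wrt_hd_le sorted_wrt_le_last sorted_wrt_if_successively_path_step that by blast+
  have c_right_of_P2: "\<forall>p\<in>set P2. fst p = fst c \<longrightarrow> snd p \<le> snd c"
    using bounds(2)[OF steps(2)] P2(3) b c by (force simp: less_eq_prod_def)
  have a_right_of_Q: "\<forall>q\<in>set Q. fst q = fst a \<longrightarrow> snd q \<le> snd a"
    using bounds(2)[OF steps(3)] Q(3) a c by (force simp: less_eq_prod_def)
  show ?thesis
  proof (cases "fst j \<le> fst i")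
    case True
    have "fst i \<le> fst a"
      using bounds(2)[OF steps(1) ends(1)] P1(3) by (simp add: less_eq_prod_def)
    then obtain x where x: "x \<in> set Q" "fst x = fst i"
      using path_meets_every_row[OF steps(3) Q(1), of "fst i"] True Q c by auto
    show ?thesis
    proof (cases "snd x \<le> snd i")
      case True
      then show ?thesis
        using monotone_paths_meet[OF steps(3,2) x(1) ends(2)] x P2(3) Q(3) b c_right_of_P2 by auto
    next
      case False
      then show ?thesis
        using monotone_paths_meet[OF steps(1,3) ends(1) x(1)] x P1(3) Q(3) c a_right_of_Q by auto
    qed
  next
    case False
    with i j have j_left: "snd j = sl" "sl \<le> snd i"
      by (auto simp: input_boundary_def in_block_def)
    have "fst (hd P2) \<le> fst j" "fst j \<le> fst (last P2)"
      using False bounds(2)[OF steps(3) ends(3)] P2(2,3) Q(3) b by (auto simp: less_eq_prod_def)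
    then obtain p where p: "p \<in> set P2" "fst p = fst j"
      using path_meets_every_row[OF steps(2) P2(1)] by blast
    have "snd j \<le> snd p"
      using bounds(1)[OF steps(2) p(1)] P2(2) j_left by (simp add: less_eq_prod_def)
    then show ?thesis
      using monotone_paths_meet[OF steps(3,2) ends(3) p] P2(3) Q(3) b c_right_of_P2 by auto
  qed
qed

lemma reachable_between_on_right_column:
  assumes "i \<in> input_boundary rl ru sl su" "j \<in> input_boundary rl ru sl su"
    and "snd a = su" "snd c = su" "fst a < fst c" "fst c \<le> fst b" "snd b \<le> su"
    and "reachable m n M i a" "reachable m n M i b" "reachable m n M j c"
  shows "reachable m n M i c"
proof -
  obtain P1 P2 Q where
    P1: "is_path m n M P1" "hd P1 = i" "last P1 = a" and
    P2: "is_path m n M P2" "hd P2 = i" "last P2 = b" and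
    Q: "is_path m n M Q" "hd Q = j" "last Q = c"
    using assms(8-10) unfolding reachable_def by blast
  then obtain z where z: "z \<in> set Q" "z \<in> set P1 \<or> z \<in> set P2"
    using paths_to_right_column_meet[OF assms(1-7)] unfolding is_path_iff_successively by blast
  have "reachable m n M i z"
    using z(2) reachable_via_path(1)[OF P1(1)] reachable_via_path(1)[OF P2(1)] P1(2) P2(2) by metis
  moreover have "reachable m n M z c"
    using reachable_via_path(2)[OF Q(1) z(1)] Q(3) by simp
  ultimately show ?thesis
    by (rule reachable_trans)
qed

theorem corollary1:
  fixes m n :: nat and M :: "nat \<Rightarrow> nat \<Rightarrow> nat"
    and rl ru sl su :: nat and i j a b c :: "nat \<times> nat"
  assumes "zero_one_matrix m n M"
    and "is_block m n rl ru sl su"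
    and "i \<in> input_boundary rl ru sl su"
    and "a \<in> output_boundary rl ru sl su" and "b \<in> output_boundary rl ru sl su"
    and "reachable m n M i a" and "reachable m n M i b"
    and "output_less rl ru sl su a b"
    and "j \<in> input_boundary rl ru sl su"
    and "c \<in> output_boundary rl ru sl su"
    and "reachable m n M j c"
    and "output_less rl ru sl su a c" and "output_less rl ru sl su c b"
  shows "reachable m n M i c"
proof (cases "snd c = su")
  case True
  then have "snd a = su" "fst a < fst c" "fst c \<le> fst b" "snd b \<le> su"
    using assms(4,5,10,12,13)
    by (auto simp: output_boundary_def in_block_def output_less_def output_pos_def split: if_splits)
  with True show ?thesis
    using reachable_between_on_right_column assms(3,6,7,9,11) by blast
next
  case False
  then have "fst c = ru" "fst b = ru" "snd b < snd c" "snd c \<le> snd a" "fst a \<le> ru"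
    using assms(4,5,10,12,13)
    by (auto simp: output_boundary_def in_block_def output_less_def output_pos_def split: if_splits)
  \<comment> \<open>Transposing turns row ru into column su and reverses the order, so a and b swap roles.\<close>
  moreover have "prod.swap x \<in> input_boundary sl su rl ru" if "x \<in> input_boundary rl ru sl su" for x
    using that by (auto simp: input_boundary_def in_block_def)
  ultimately have "reachable n m (\<lambda>r s. M s r) (prod.swap i) (prod.swap c)"
    using reachable_between_on_right_column[of "prod.swap i" sl su rl ru "prod.swap j" "prod.swap b"
        "prod.swap c" "prod.swap a"] reachable_transpose assms(3,6,7,9,11) by auto
  from reachable_transpose[OF this] show ?thesis
    by simp
qed

end
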